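(* Let $p(x)=x^n+p_{n-1}x^{n-1}+\cdots+p_0\in\mathcal{O}[x]$ and let $(p,\mathcal{D})$ be a GNS over $\mathcal{O}$ with associated fundamental domain $\mathcal{F}$. Set $p_n=1$, $\Delta=\mathcal{N}\cdot\boldsymbol{\omega}$ and $Z=\{\sum_{j=1}^n\delta_jp_j:\delta_j\in\Delta\}$. Assume (i) $Z+\mathcal{D}\subset\mathcal{D}+p_0\Delta$; (ii) $Z\subset\mathcal{D}\cup(\mathcal{D}-p_0)$; (iii) $\{\sum_{j\in J}p_j: J\subseteq\{1,\ldots,n\}\}\subseteq\mathcal{D}$. Then $(p,\mathcal{D})$ has the finiteness property.
   Context: $\mathbb{K}$ is a number field of degree $k$, $\mathcal{O}$ an order in $\mathbb{K}$ with $\mathbb{Z}$-basis $\omega_1=1,\ldots,\omega_k$, $\boldsymbol{\omega}=(\omega_1,\ldots,\omega_k)$. A GNS over $\mathcal{O}$ is a pair $(p,\mathcal{D})$ with $p\in\mathcal{O}[x]$ monic and $\mathcal{D}\subset\mathcal{O}$ a complete residue system modulo $p(0)$ containing $0$; it has the finiteness property if every $a\in\mathcal{O}[x]$ satisfies $a\equiv\sum_{j=0}^{\ell-1}d_jx^j\pmod p$ for some $\ell\in\mathbb{N}$, $d_j\in\mathcal{D}$. A fundamental domain associated with $(p,\mathcal{D})$ is a bounded set $\mathcal{F}\subset\mathbb{R}^k$ with $\mathbb{R}^k=\mathcal{F}+\mathbb{Z}^k$ disjointly and $\mathcal{D}=\{p(0)\sum_j f_j\omega_j:(f_1,\ldots,f_k)\in\mathcal{F}\}\cap\mathcal{O}$.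 $\mathcal{N}=\{\mathbf{z}\in\mathbb{Z}^k:\overline{\mathcal{F}}\cap(\overline{\mathcal{F}}+\mathbf{z})\neq\emptyset\}$ and $\mathcal{N}\cdot\boldsymbol{\omega}=\{\sum_j z_j\omega_j:\mathbf{z}\in\mathcal{N}\}$. Sums of sets are Minkowski sums, $p_0\Delta=\{p_0\delta:\delta\in\Delta\}$. *)

theory Defs
  imports "HOL-Analysis.Analysis" "HOL-Computational_Algebra.Polynomial"
begin

text \<open>The number field K of degree k is realised inside the complex numbers.
  The order O is given by its Z-basis omega, indexed by a finite type 'k with k = CARD('k);
  the distinguished index i0 plays the role of omega_1 = 1.\<close>

definition lin_comb :: "('k::finite \<Rightarrow> complex) \<Rightarrow> ('k \<Rightarrow> complex) \<Rightarrow> complex" where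
  "lin_comb c \<omega> = (\<Sum>i\<in>UNIV. c i * \<omega> i)"

definition order_set :: "('k::finite \<Rightarrow> complex) \<Rightarrow> complex set" where
  "order_set \<omega> = {lin_comb (\<lambda>i. of_int (z i)) \<omega> | z. True}"

text \<open>omega is a Z-basis (Z-linearly independent) of a subring of C containing 1 = omega i0;
  its Q-span is then a number field of degree k, and the Z-span is an order in it.\<close>
definition is_order_basis :: "('k::finite \<Rightarrow> complex) \<Rightarrow> 'k \<Rightarrow> bool" where
  "is_order_basis \<omega> i0 \<longleftrightarrow>
     \<omega> i0 = 1 \<and>
     (\<forall>z::'k \<Rightarrow> int. lin_comb (\<lambda>i. of_int (z i)) \<omega> = 0 \<longrightarrow> (\<forall>i. z i = 0)) \<and>
     (\<forall>i j. \<omega> i * \<omega> j \<in> order_set \<omega>)"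

definition poly_over :: "complex set \<Rightarrow> complex poly set" where
  "poly_over R = {a. \<forall>i. coeff a i \<in> R}"

definition complete_residue_system :: "complex set \<Rightarrow> complex \<Rightarrow> complex set \<Rightarrow> bool" where
  "complete_residue_system R m D \<longleftrightarrow> D \<subseteq> R \<and>
     (\<forall>a\<in>R. \<exists>!d. d \<in> D \<and> (\<exists>q\<in>R. a - d = m * q))"

definition is_GNS :: "complex set \<Rightarrow> complex poly \<Rightarrow> complex set \<Rightarrow> bool" where
  "is_GNS R p D \<longleftrightarrow> p \<in> poly_over R \<and> lead_coeff p = 1 \<and> 0 \<in> D \<and>
     complete_residue_system R (coeff p 0) D"

definition finiteness_property :: "complex set \<Rightarrow> complex poly \<Rightarrow> complex set \<Rightarrow> bool" where
  "finiteness_property R p D \<longleftrightarrow>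
     (\<forall>a\<in>poly_over R. \<exists>(l::nat) (d::nat \<Rightarrow> complex).
        (\<forall>j<l. d j \<in> D) \<and>
        (\<exists>q\<in>poly_over R. a - (\<Sum>j<l. monom (d j) j) = p * q))"

definition int_vec :: "(real^'k) \<Rightarrow> bool" where
  "int_vec z \<longleftrightarrow> (\<forall>i. z $ i \<in> \<int>)"

definition is_fundamental_domain ::
  "('k::finite \<Rightarrow> complex) \<Rightarrow> complex poly \<Rightarrow> complex set \<Rightarrow> (real^'k) set \<Rightarrow> bool" where
  "is_fundamental_domain \<omega> p D F \<longleftrightarrow>
     bounded F \<and>
     (\<forall>x::real^'k. \<exists>!fz. fst fz \<in> F \<and> int_vec (snd fz) \<and> x = fst fz + snd fz) \<and>
     D = {coeff p 0 * lin_comb (\<lambda>i. of_real (f $ i)) \<omega> | f. f \<in> F} \<inter> order_set \<omega>"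

definition nbr_set :: "(real^'k) set \<Rightarrow> (real^'k) set" where
  "nbr_set F = {z. int_vec z \<and> closure F \<inter> ((\<lambda>x. x + z) ` closure F) \<noteq> {}}"

definition Delta_set :: "('k::finite \<Rightarrow> complex) \<Rightarrow> (real^'k) set \<Rightarrow> complex set" where
  "Delta_set \<omega> F = {lin_comb (\<lambda>i. of_real (z $ i)) \<omega> | z. z \<in> nbr_set F}"

end

theory Submission imports Defs begin

text \<open>Call a polynomial a shift if adding it to a polynomial with a digit expansion modulo \<open>p\<close>
  again gives one. Shifts are closed under addition and multiplication by \<open>x\<close>, so it suffices that
  every constant of \<open>\<O>\<close> is a shift. A vector \<open>\<delta>\<close> of carries in \<open>\<Delta>\<close> is encoded by the carry
  polynomial \<open>E(\<delta>)\<close>, whose constant term lies in \<open>Z\<close>. Digits plus \<open>E(\<delta>)\<close> can be processed one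
  position at a time: by (i) the constant term splits into a digit and \<open>p\<^sub>0\<close> times a new carry in
  \<open>\<Delta>\<close>, which shortens the digit string. For \<open>E(\<delta>)\<close> alone, (ii) makes each new carry \<open>0\<close> or \<open>1\<close>,
  and once all carries are binary (iii) turns every constant term into a digit, so the process stops.
  Thus carry polynomials are shifts, and a single carry \<open>c\<close> in the top position is the constant
  \<open>c\<close>. Finally \<open>\<Delta> = \<N> \<cdot> \<omega>\<close> and \<open>\<N>\<close> generates \<open>\<int>\<^sup>k\<close>, since the translates of the closed
  fundamental domain cover the connected space \<open>\<real>\<^sup>k\<close>.\<close>

section \<open>Integer translates of a fundamental domain\<close>

lemma closed_int_vecs:
  assumes "S \<subseteq> {z::real^'k. int_vec z}"
  shows "closed S"
proof (rule discrete_imp_closed[of 1], simp, intro ballI impI)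
  fix x y :: "real^'k" assume x: "x \<in> S" and y: "y \<in> S" and d: "dist y x < 1"
  show "y = x"
  proof (rule vec_eq_iff[THEN iffD2], rule allI)
    fix i
    have "\<bar>(y - x)$i\<bar> \<le> norm (y - x)" by (rule component_le_norm_cart)
    also have "\<dots> < 1" using d by (simp add: dist_norm)
    finally have lt: "\<bar>y$i - x$i\<bar> < 1" by simp
    have "y$i \<in> \<int>" "x$i \<in> \<int>" using x y assms by (auto simp: int_vec_def)
    then have "y$i - x$i \<in> \<int>" by (rule Ints_diff)
    then obtain m where m: "y$i - x$i = of_int m" by (auto elim: Ints_cases)
    with lt have "m = 0" by simp
    with m show "y$i = x$i" by simp
  qed
qed

lemma closed_int_translates:
  fixes F :: "(real^'k) set"
  assumes "bounded F" "H \<subseteq> {z. int_vec z}"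
  shows "closed (\<Union>h\<in>H. \<Union>a\<in>closure F. {h + a})"
  by (rule closed_compact_sums) (use assms closed_int_vecs in \<open>auto simp: compact_closure\<close>)

text \<open>The translates of \<open>closure F\<close> by \<open>H\<close> and by the other integer vectors are closed, cover
  the connected space and can only meet if some \<open>h \<in> H\<close> differs from an outside vector by
  a neighbour.\<close>
lemma int_vecs_generated_by_nbr_set:
  fixes F :: "(real^'k) set"
  assumes bF: "bounded F"
    and cover: "\<forall>x. \<exists>f z. f \<in> F \<and> int_vec z \<and> x = f + z"
    and H0: "0 \<in> H" and Hint: "H \<subseteq> {z. int_vec z}"
    and Hadd: "\<forall>h\<in>H. \<forall>m\<in>nbr_set F. h + m \<in> H"
    and g: "int_vec g"
  shows "g \<in> H"
proof (rule ccontr)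
  assume gH: "g \<notin> H"
  let ?A = "\<Union>h\<in>H. \<Union>a\<in>closure F. {h + a}"
  let ?B = "\<Union>h\<in>{z. int_vec z} - H. \<Union>a\<in>closure F. {h + a}"
  have closed: "closed ?A" "closed ?B" by (rule closed_int_translates[OF bF]; use Hint in auto)+
  have cov: "UNIV \<subseteq> ?A \<union> ?B"
  proof
    fix x :: "real^'k"
    obtain f z where "f \<in> F" "int_vec z" "x = f + z" using cover by blast
    then have "f \<in> closure F" "x = z + f" using closure_subset by (auto simp: add.commute)
    then show "x \<in> ?A \<union> ?B" using \<open>int_vec z\<close> by (cases "z \<in> H") auto
  qed
  have disj: "?A \<inter> ?B = {}"
  proof (rule ccontr)
    assume "?A \<inter> ?B \<noteq> {}"
    then obtain h a h' a' where h: "h \<in> H" and a: "a \<in> closure F" and h': "int_vec h'" "h' \<notin> H"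
      and a': "a' \<in> closure F" and eq: "h + a = h' + a'" by auto
    have "h' - h \<in> nbr_set F"
      unfolding nbr_set_def
    proof (intro CollectI conjI)
      show "int_vec (h' - h)" using h' Hint h by (auto simp: int_vec_def)
      have "a = a' + (h' - h)" using eq by (simp add: algebra_simps)
      then show "closure F \<inter> (\<lambda>x. x + (h' - h)) ` closure F \<noteq> {}" using a a' by auto
    qed
    then have "h + (h' - h) \<in> H" using Hadd h by blast
    then show False using h' by simp
  qed
  have "closure F \<noteq> {}" using cover closure_subset by blast
  then have "?A \<noteq> {}" "?B \<noteq> {}" using H0 g gH by auto
  then show False
    using connected_UNIV[where 'a="real^'k"] closed cov disj unfolding connected_closed
    by (metis inf_top_right)
qed

section \<open>The order and the set \<open>\<Delta>\<close>\<close>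

lemma lin_comb_add: "lin_comb (\<lambda>i. x i + y i) \<omega> = lin_comb x \<omega> + lin_comb y \<omega>"
  by (simp add: lin_comb_def distrib_right sum.distrib)

lemma order_set_add: "a \<in> order_set \<omega> \<Longrightarrow> b \<in> order_set \<omega> \<Longrightarrow> a + b \<in> order_set \<omega>"
proof -
  assume "a \<in> order_set \<omega>" "b \<in> order_set \<omega>"
  then obtain x y where "a = lin_comb (\<lambda>i. of_int (x i)) \<omega>" "b = lin_comb (\<lambda>i. of_int (y i)) \<omega>"
    by (auto simp: order_set_def)
  then have "a + b = lin_comb (\<lambda>i. of_int (x i + y i)) \<omega>" by (simp add: lin_comb_add)
  then show ?thesis unfolding order_set_def by (intro CollectI exI[of _ "\<lambda>i. x i + y i"]) simp
qed

lemma zero_in_order_set: "0 \<in> order_set \<omega>"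
  unfolding order_set_def lin_comb_def by (auto intro!: exI[of _ "\<lambda>i. 0"])

lemma uminus_in_nbr_set: "z \<in> nbr_set F \<Longrightarrow> - z \<in> nbr_set F"
proof -
  assume "z \<in> nbr_set F"
  then obtain a b where "a \<in> closure F" "b \<in> closure F" "a = b + z" and "int_vec z"
    by (auto simp: nbr_set_def)
  then have "b \<in> closure F \<inter> (\<lambda>x. x + - z) ` closure F" "int_vec (- z)"
    by (auto simp: int_vec_def intro!: image_eqI[of b _ a])
  then show ?thesis unfolding nbr_set_def by blast
qed

lemma zero_in_Delta_set: "F \<noteq> {} \<Longrightarrow> 0 \<in> Delta_set \<omega> F"
proof -
  assume "F \<noteq> {}"
  then have "0 \<in> nbr_set F" using closure_subset by (auto simp: nbr_set_def int_vec_def)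
  then show ?thesis unfolding Delta_set_def lin_comb_def by force
qed

lemma uminus_in_Delta_set: "x \<in> Delta_set \<omega> F \<Longrightarrow> - x \<in> Delta_set \<omega> F"
proof -
  assume "x \<in> Delta_set \<omega> F"
  then obtain z where z: "z \<in> nbr_set F" and x: "x = lin_comb (\<lambda>i. of_real (z$i)) \<omega>"
    by (auto simp: Delta_set_def)
  have "- x = lin_comb (\<lambda>i. of_real ((- z)$i)) \<omega>"
    using x by (simp add: lin_comb_def sum_negf)
  then show ?thesis using uminus_in_nbr_set[OF z] unfolding Delta_set_def by blast
qed

lemma Delta_set_subset_order_set: "Delta_set \<omega> F \<subseteq> order_set \<omega>"
proof
  fix x assume "x \<in> Delta_set \<omega> F"
  then obtain z where z: "int_vec z" and x: "x = lin_comb (\<lambda>i. of_real (z$i)) \<omega>"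
    by (auto simp: Delta_set_def nbr_set_def)
  have "\<forall>i. \<exists>m. z$i = of_int m" using z by (auto simp: int_vec_def elim: Ints_cases)
  then obtain m where "\<And>i. z$i = of_int (m i)" by metis
  then have "x = lin_comb (\<lambda>i. of_int (m i)) \<omega>" using x by simp
  then show "x \<in> order_set \<omega>" unfolding order_set_def by blast
qed

section \<open>Carry polynomials\<close>

text \<open>\<open>carry_poly p \<delta>\<close> is the polynomial part of \<open>p \<cdot> (\<Sum>k. \<delta> k x\<^sup>-\<^sup>k\<^sup>-\<^sup>1)\<close>.\<close>
definition carry_poly :: "'a::comm_ring_1 poly \<Rightarrow> (nat \<Rightarrow> 'a) \<Rightarrow> 'a poly" where
  "carry_poly p \<delta> = (\<Sum>k<degree p. smult (\<delta> k) (poly_shift (Suc k) p))"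

lemma coeff_carry_poly: "coeff (carry_poly p \<delta>) i = (\<Sum>k<degree p. \<delta> k * coeff p (i + Suc k))"
  by (simp add: carry_poly_def coeff_sum coeff_poly_shift)

lemma carry_poly_pCons:
  assumes "degree p > 0"
  shows "carry_poly p \<delta> =
    pCons (coeff (carry_poly p \<delta>) 0 - coeff p 0 * e) (carry_poly p (case_nat (- e) \<delta>)) + smult e p"
proof (rule poly_eqI)
  fix i
  obtain m where m: "degree p = Suc m" using assms by (cases "degree p") auto
  show "coeff (carry_poly p \<delta>) i = coeff (pCons (coeff (carry_poly p \<delta>) 0 - coeff p 0 * e)
      (carry_poly p (case_nat (- e) \<delta>)) + smult e p) i"
  proof (cases i)
    case (Suc j)
    have "coeff p (Suc j + Suc m) = 0" using m by (intro coeff_eq_0) simp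
    then have L: "(\<Sum>k<Suc m. \<delta> k * coeff p (Suc j + Suc k)) = (\<Sum>k<m. \<delta> k * coeff p (Suc j + Suc k))"
      by (simp only: sum.lessThan_Suc) simp
    have R: "(\<Sum>k<Suc m. case_nat (- e) \<delta> k * coeff p (j + Suc k)) =
        - e * coeff p (Suc j) + (\<Sum>k<m. \<delta> k * coeff p (j + Suc (Suc k)))"
      by (simp only: sum.lessThan_Suc_shift) simp
    show ?thesis unfolding Suc
      by (simp only: coeff_pCons_Suc coeff_add coeff_smult coeff_carry_poly m L R) (simp add: algebra_simps)
  qed simp
qed

lemma carry_poly_top:
  assumes "lead_coeff p = 1" "degree p > 0"
  shows "carry_poly p (\<lambda>k. if k = degree p - 1 then c else 0) = [:c:]"
proof -
  have "poly_shift (degree p) p = 1"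
    using assms(1) by (intro poly_eqI) (auto simp: coeff_poly_shift coeff_eq_0 coeff_1)
  moreover have "carry_poly p (\<lambda>k. if k = degree p - 1 then c else 0) =
      (\<Sum>k<degree p. if k = degree p - 1 then smult c (poly_shift (Suc k) p) else 0)"
    unfolding carry_poly_def by (rule sum.cong) auto
  ultimately show ?thesis using assms(2) by (simp add: sum.delta')
qed

lemma monom_sum_Suc:
  "(\<Sum>j<Suc l. monom (d j) j) = pCons (d 0) (\<Sum>j<l. monom (d (Suc j)) j)"
  by (induction l) (simp_all add: monom_Suc monom_0)

section \<open>Digit expansions\<close>

definition digit_rep :: "complex set \<Rightarrow> complex poly \<Rightarrow> complex set \<Rightarrow> complex poly \<Rightarrow> bool" where
  "digit_rep R p D b \<longleftrightarrow> (\<exists>(l::nat) (d::nat \<Rightarrow> complex). (\<forall>j<l. d j \<in> D) \<and>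
     (\<exists>q\<in>poly_over R. b - (\<Sum>j<l. monom (d j) j) = p * q))"

lemma finiteness_property_iff_digit_rep:
  "finiteness_property R p D \<longleftrightarrow> (\<forall>a\<in>poly_over R. digit_rep R p D a)"
  by (simp add: finiteness_property_def digit_rep_def)

lemma finiteness_property_1: "finiteness_property R 1 D"
  unfolding finiteness_property_def by (auto intro!: exI[of _ 0])

lemma pCons_in_poly_over_iff: "pCons a q \<in> poly_over R \<longleftrightarrow> a \<in> R \<and> q \<in> poly_over R"
proof -
  have "(\<forall>i. coeff (pCons a q) i \<in> R) \<longleftrightarrow>
      coeff (pCons a q) 0 \<in> R \<and> (\<forall>i. coeff (pCons a q) (Suc i) \<in> R)"
    by (metis nat.exhaust)
  then show ?thesis by (simp add: poly_over_def)
qed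

lemma zero_in_poly_over: "0 \<in> poly_over (order_set \<omega>)"
  by (simp add: poly_over_def zero_in_order_set)

lemma poly_over_add:
  "a \<in> poly_over (order_set \<omega>) \<Longrightarrow> b \<in> poly_over (order_set \<omega>) \<Longrightarrow> a + b \<in> poly_over (order_set \<omega>)"
  by (simp add: poly_over_def order_set_add)

lemma const_in_poly_over: "c \<in> order_set \<omega> \<Longrightarrow> [:c:] \<in> poly_over (order_set \<omega>)"
  using zero_in_poly_over by (simp add: pCons_in_poly_over_iff)

lemma digit_rep_digit_sum:
  "\<forall>j<l. d j \<in> D \<Longrightarrow> digit_rep (order_set \<omega>) p D (\<Sum>j<l. monom (d j) j)"
  unfolding digit_rep_def using zero_in_poly_over by (intro exI[of _ l] exI[of _ d] conjI bexI[of _ 0]) simp_all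

lemma digit_rep_add_mult:
  assumes "digit_rep (order_set \<omega>) p D b" "q \<in> poly_over (order_set \<omega>)"
  shows "digit_rep (order_set \<omega>) p D (b + p * q)"
proof -
  from assms(1) obtain l d q' where "\<forall>j<l. d j \<in> D" "q' \<in> poly_over (order_set \<omega>)"
    and "b - (\<Sum>j<l. monom (d j) j) = p * q'" unfolding digit_rep_def by blast
  moreover from this have "b + p * q - (\<Sum>j<l. monom (d j) j) = p * (q' + q)"
    by (simp add: algebra_simps)
  moreover have "q' + q \<in> poly_over (order_set \<omega>)" using \<open>q' \<in> _\<close> assms(2) by (rule poly_over_add)
  ultimately show ?thesis unfolding digit_rep_def by blast
qed

lemma digit_rep_pCons:
  assumes "d \<in> D" "digit_rep (order_set \<omega>) p D b"
  shows "digit_rep (order_set \<omega>) p D (pCons d b)"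
proof -
  from assms(2) obtain l d' q where d': "\<forall>j<l. d' j \<in> D" and q: "q \<in> poly_over (order_set \<omega>)"
    and eq: "b - (\<Sum>j<l. monom (d' j) j) = p * q" unfolding digit_rep_def by blast
  have "pCons d b - (\<Sum>j<Suc l. monom (case_nat d d' j) j) = p * pCons 0 q"
    unfolding monom_sum_Suc using eq by (simp add: algebra_simps)
  moreover have "\<forall>j<Suc l. case_nat d d' j \<in> D" using d' assms(1) by (auto split: nat.split)
  moreover have "pCons 0 q \<in> poly_over (order_set \<omega>)"
    using q by (simp add: pCons_in_poly_over_iff zero_in_order_set)
  ultimately show ?thesis unfolding digit_rep_def by blast
qed

lemma digit_rep_pCons_smult:
  assumes "d \<in> D" "e \<in> order_set \<omega>" "digit_rep (order_set \<omega>) p D b"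
  shows "digit_rep (order_set \<omega>) p D (pCons d b + smult e p)"
  using digit_rep_add_mult[OF digit_rep_pCons[OF assms(1,3)] const_in_poly_over[OF assms(2)]]
  by simp

lemma digit_rep_cases:
  assumes "0 \<in> D" "digit_rep (order_set \<omega>) p D b"
  obtains d s q where "d \<in> D" "digit_rep (order_set \<omega>) p D s" "q \<in> poly_over (order_set \<omega>)"
    "b = pCons d s + p * q"
proof -
  from assms(2) obtain l d q where d: "\<forall>j<l. d j \<in> D" and q: "q \<in> poly_over (order_set \<omega>)"
    and eq: "b - (\<Sum>j<l. monom (d j) j) = p * q" unfolding digit_rep_def by blast
  from eq have b: "b = (\<Sum>j<l. monom (d j) j) + p * q" by (simp add: algebra_simps)
  show thesis
  proof (cases l)
    case 0
    have "digit_rep (order_set \<omega>) p D 0" using digit_rep_digit_sum[of 0] by simp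
    with 0 show thesis using that[of 0 0 q] assms(1) q b by simp
  next
    case (Suc m)
    have "digit_rep (order_set \<omega>) p D (\<Sum>j<m. monom (d (Suc j)) j)"
      using d Suc by (intro digit_rep_digit_sum) simp
    with Suc show thesis using that[of "d 0" _ q] d q b by (simp only: monom_sum_Suc)
  qed
qed

definition digit_rep_shifts :: "complex set \<Rightarrow> complex poly \<Rightarrow> complex set \<Rightarrow> complex poly set" where
  "digit_rep_shifts R p D = {g. \<forall>b. digit_rep R p D b \<longrightarrow> digit_rep R p D (b + g)}"

lemma digit_rep_shifts_add:
  "g \<in> digit_rep_shifts R p D \<Longrightarrow> h \<in> digit_rep_shifts R p D \<Longrightarrow> g + h \<in> digit_rep_shifts R p D"
  unfolding digit_rep_shifts_def by (simp add: add.assoc[symmetric])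

lemma digit_rep_shifts_pCons_0:
  assumes "0 \<in> D" "g \<in> digit_rep_shifts (order_set \<omega>) p D"
  shows "pCons 0 g \<in> digit_rep_shifts (order_set \<omega>) p D"
  unfolding digit_rep_shifts_def
proof (intro CollectI allI impI)
  fix b assume "digit_rep (order_set \<omega>) p D b"
  then obtain d s q where "d \<in> D" "digit_rep (order_set \<omega>) p D s" "q \<in> poly_over (order_set \<omega>)"
    and b: "b = pCons d s + p * q" using digit_rep_cases assms(1) by blast
  then have "digit_rep (order_set \<omega>) p D (pCons d (s + g) + p * q)"
    using assms(2) by (intro digit_rep_add_mult digit_rep_pCons) (auto simp: digit_rep_shifts_def)
  then show "digit_rep (order_set \<omega>) p D (b + pCons 0 g)" by (simp add: b algebra_simps)
qed

lemma finiteness_property_if_const_shifts: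
  assumes "0 \<in> D" and const: "\<And>c. c \<in> order_set \<omega> \<Longrightarrow> [:c:] \<in> digit_rep_shifts (order_set \<omega>) p D"
  shows "finiteness_property (order_set \<omega>) p D"
proof -
  have "a \<in> digit_rep_shifts (order_set \<omega>) p D" if "a \<in> poly_over (order_set \<omega>)" for a
    using that
  proof (induction a)
    case 0
    then show ?case by (simp add: digit_rep_shifts_def)
  next
    case (pCons a q)
    then have "[:a:] + pCons 0 q \<in> digit_rep_shifts (order_set \<omega>) p D"
      by (intro digit_rep_shifts_add const digit_rep_shifts_pCons_0 assms(1))
        (simp_all add: pCons_in_poly_over_iff)
    then show ?case by simp
  qed
  moreover have "digit_rep (order_set \<omega>) p D 0" using digit_rep_digit_sum[of 0] by simp
  ultimately show ?thesis
    unfolding finiteness_property_iff_digit_rep digit_rep_shifts_def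
    by (metis (no_types, lifting) add_0 mem_Collect_eq)
qed

section \<open>The finiteness criterion\<close>

locale GNS_criterion =
  fixes \<omega> :: "'k::finite \<Rightarrow> complex" and p :: "complex poly" and D :: "complex set"
    and F :: "(real^'k) set"
  assumes gns: "is_GNS (order_set \<omega>) p D"
    and fd: "is_fundamental_domain \<omega> p D F"
    and Z_plus_D: "{z + d | z d. z \<in> {\<Sum>j\<in>{1..degree p}. \<delta> j * coeff p j | \<delta>. \<forall>j. \<delta> j \<in> Delta_set \<omega> F}
                        \<and> d \<in> D}
            \<subseteq> {d + coeff p 0 * e | d e. d \<in> D \<and> e \<in> Delta_set \<omega> F}"
    and Z_subset: "{\<Sum>j\<in>{1..degree p}. \<delta> j * coeff p j | \<delta>. \<forall>j. \<delta> j \<in> Delta_set \<omega> F}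
            \<subseteq> D \<union> {d - coeff p 0 | d. d \<in> D}"
    and subset_sums: "\<forall>J \<subseteq> {1..degree p}. (\<Sum>j\<in>J. coeff p j) \<in> D"
    and degree_pos: "degree p > 0"
begin

abbreviation "\<Delta> \<equiv> Delta_set \<omega> F"
abbreviation "Z \<equiv> {\<Sum>j\<in>{1..degree p}. \<delta> j * coeff p j | \<delta>. \<forall>j. \<delta> j \<in> \<Delta>}"

lemma D_subset_order_set: "D \<subseteq> order_set \<omega>" and zero_in_D: "0 \<in> D"
  using gns by (auto simp: is_GNS_def complete_residue_system_def)

lemma residue_unique:
  assumes "a \<in> order_set \<omega>" "d1 \<in> D" "d2 \<in> D" "q1 \<in> order_set \<omega>" "q2 \<in> order_set \<omega>"
    "a - d1 = coeff p 0 * q1" "a - d2 = coeff p 0 * q2"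
  shows "d1 = d2"
  using gns assms unfolding is_GNS_def complete_residue_system_def by blast

lemma zero_in_Delta: "0 \<in> \<Delta>"
  using fd zero_in_Delta_set unfolding is_fundamental_domain_def by blast

lemma one_in_D: "1 \<in> D"
proof -
  have "{degree p} \<subseteq> {1..degree p}" using degree_pos by auto
  then have "(\<Sum>j\<in>{degree p}. coeff p j) \<in> D" using subset_sums by blast
  then show ?thesis using gns by (simp add: is_GNS_def)
qed

lemma coeff_0_nonzero: "coeff p 0 \<noteq> 0"
proof
  assume "coeff p 0 = 0"
  then have "D \<subseteq> {0}" using fd unfolding is_fundamental_domain_def by auto
  then show False using one_in_D by auto
qed

lemma carry_constant_in_Z: "\<forall>k. \<delta> k \<in> \<Delta> \<Longrightarrow> coeff (carry_poly p \<delta>) 0 \<in> Z"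
proof -
  assume \<delta>: "\<forall>k. \<delta> k \<in> \<Delta>"
  have "(\<Sum>j\<in>{1..degree p}. \<delta> (j - 1) * coeff p j) = (\<Sum>j\<in>Suc ` {..<degree p}. \<delta> (j - 1) * coeff p j)"
    by (simp add: image_Suc_lessThan)
  also have "\<dots> = coeff (carry_poly p \<delta>) 0" by (subst sum.reindex) (auto simp: coeff_carry_poly)
  finally show ?thesis using \<delta> by (intro CollectI exI[of _ "\<lambda>j. \<delta> (j - 1)"]) auto
qed

lemma binary_carry_constant_in_D: "\<forall>k<degree p. \<delta> k \<in> {0, 1} \<Longrightarrow> coeff (carry_poly p \<delta>) 0 \<in> D"
proof -
  assume \<delta>: "\<forall>k<degree p. \<delta> k \<in> {0, 1}"
  let ?K = "{k \<in> {..<degree p}. \<delta> k = 1}"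
  have "(\<Sum>j\<in>Suc ` ?K. coeff p j) \<in> D" using subset_sums by (simp add: image_subset_iff)
  moreover have "(\<Sum>j\<in>Suc ` ?K. coeff p j) = (\<Sum>k\<in>?K. coeff p (Suc k))"
    by (subst sum.reindex) auto
  moreover have "\<dots> = (\<Sum>k<degree p. if \<delta> k = 1 then coeff p (Suc k) else 0)"
    by (rule sum.inter_filter) simp
  moreover have "\<dots> = coeff (carry_poly p \<delta>) 0"
    unfolding coeff_carry_poly by (rule sum.cong) (use \<delta> in auto)
  ultimately show ?thesis by simp
qed

text \<open>Adding \<open>0 \<in> D\<close> to \<open>z \<in> Z\<close> gives \<open>z = d + p\<^sub>0 e\<close> with \<open>e \<in> \<Delta>\<close> by (i); as \<open>z + p\<^sub>0\<close> is a
  digit as well, uniqueness of residues forces \<open>e = -1\<close>.\<close>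
lemma one_in_Delta_if: "z \<in> Z \<Longrightarrow> z + coeff p 0 \<in> D \<Longrightarrow> 1 \<in> \<Delta>"
proof -
  assume z: "z \<in> Z" and d: "z + coeff p 0 \<in> D"
  have "z + 0 \<in> {z + d | z d. z \<in> Z \<and> d \<in> D}" using z zero_in_D by blast
  then obtain d e where "d \<in> D" and e: "e \<in> \<Delta>" and eq: "z + 0 = d + coeff p 0 * e"
    using Z_plus_D by blast
  have "1 + e \<in> order_set \<omega>"
    using e one_in_D D_subset_order_set Delta_set_subset_order_set by (blast intro: order_set_add)
  then have "z + coeff p 0 = d"
    using residue_unique[of "z + coeff p 0" "z + coeff p 0" d 0 "1 + e"] d \<open>d \<in> D\<close> eq
      D_subset_order_set zero_in_order_set by (auto simp: algebra_simps)
  then have "coeff p 0 * (1 + e) = 0" using eq by (simp add: algebra_simps)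
  then have "e = -1" using coeff_0_nonzero by (simp add: add_eq_0_iff)
  then show ?thesis using uminus_in_Delta_set[OF e] by simp
qed

lemma digit_rep_carry_step:
  assumes "digit_rep (order_set \<omega>) p D (carry_poly p (case_nat (- e) \<delta>))"
    "coeff (carry_poly p \<delta>) 0 = d + coeff p 0 * e" "d \<in> D" "e \<in> order_set \<omega>"
  shows "digit_rep (order_set \<omega>) p D (carry_poly p \<delta>)"
proof -
  have "carry_poly p \<delta> = pCons d (carry_poly p (case_nat (- e) \<delta>)) + smult e p"
    by (subst carry_poly_pCons[OF degree_pos, of \<delta> e]) (simp add: assms(2))
  then show ?thesis using digit_rep_pCons_smult[OF assms(3,4,1)] by simp
qed

lemma digit_rep_binary_carry:
  assumes "\<forall>k<degree p. \<delta> k \<in> {0, 1}" "\<forall>k<degree p - j. \<delta> k = 0"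
  shows "digit_rep (order_set \<omega>) p D (carry_poly p \<delta>)"
  using assms
proof (induction j arbitrary: \<delta>)
  case 0
  then have "carry_poly p \<delta> = 0" by (simp add: carry_poly_def)
  then show ?case using digit_rep_digit_sum[of 0] by simp
next
  case (Suc j)
  have "digit_rep (order_set \<omega>) p D (carry_poly p (case_nat (- 0) \<delta>))"
    using Suc.prems by (intro Suc.IH) (auto split: nat.split)
  moreover have "coeff (carry_poly p \<delta>) 0 \<in> D" using Suc.prems(1) by (rule binary_carry_constant_in_D)
  ultimately show ?case
    using digit_rep_carry_step[of 0 \<delta> "coeff (carry_poly p \<delta>) 0"] zero_in_order_set[of \<omega>] by simp
qed

text \<open>By (ii) every reduction step shifts in a carry \<open>0\<close> or \<open>1\<close>, so after \<open>deg p\<close> steps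
  all carries are binary.\<close>
lemma digit_rep_carry:
  assumes "\<forall>k. \<delta> k \<in> \<Delta>" "\<forall>k<degree p - j. \<delta> k \<in> {0, 1}"
  shows "digit_rep (order_set \<omega>) p D (carry_poly p \<delta>)"
  using assms
proof (induction j arbitrary: \<delta>)
  case 0
  then show ?case using digit_rep_binary_carry[of \<delta> "degree p"] by simp
next
  case (Suc j)
  let ?z = "coeff (carry_poly p \<delta>) 0"
  have z: "?z \<in> Z" using Suc.prems(1) by (rule carry_constant_in_Z)
  obtain d e where d: "d \<in> D" and eq: "?z = d + coeff p 0 * e" and e: "e \<in> {0, -1}" "- e \<in> \<Delta>"
  proof (cases "?z \<in> D")
    case True
    then show thesis using that[of ?z 0] zero_in_Delta by simp
  next
    case False
    then obtain d where "d \<in> D" "?z = d - coeff p 0" using z Z_subset by blast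
    moreover from this have "1 \<in> \<Delta>" using one_in_Delta_if z by simp
    ultimately show thesis using that[of d "-1"] by simp
  qed
  have "digit_rep (order_set \<omega>) p D (carry_poly p (case_nat (- e) \<delta>))"
    using Suc.prems e by (intro Suc.IH) (auto split: nat.split)
  moreover have "e \<in> order_set \<omega>"
    using uminus_in_Delta_set[OF e(2)] Delta_set_subset_order_set by auto
  ultimately show ?case by (rule digit_rep_carry_step[OF _ eq d])
qed

lemma digit_rep_digits_plus_carry:
  assumes "\<forall>j<l. d j \<in> D" "\<forall>k. \<delta> k \<in> \<Delta>"
  shows "digit_rep (order_set \<omega>) p D ((\<Sum>j<l. monom (d j) j) + carry_poly p \<delta>)"
  using assms
proof (induction l arbitrary: d \<delta>)
  case 0
  then show ?case using digit_rep_carry[of \<delta> "degree p"] by simp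
next
  case (Suc l)
  let ?z = "coeff (carry_poly p \<delta>) 0"
  have "?z + d 0 \<in> {z + d | z d. z \<in> Z \<and> d \<in> D}"
    using carry_constant_in_Z Suc.prems by blast
  then obtain d' e where d': "d' \<in> D" and e: "e \<in> \<Delta>" and eq: "?z + d 0 = d' + coeff p 0 * e"
    using Z_plus_D by blast
  let ?rest = "(\<Sum>j<l. monom (d (Suc j)) j) + carry_poly p (case_nat (- e) \<delta>)"
  have "digit_rep (order_set \<omega>) p D ?rest"
    using Suc.prems uminus_in_Delta_set[OF e] by (intro Suc.IH) (auto split: nat.split)
  then have "digit_rep (order_set \<omega>) p D (pCons d' ?rest + smult e p)"
    using d' e Delta_set_subset_order_set by (intro digit_rep_pCons_smult) auto
  moreover have "(\<Sum>j<Suc l. monom (d j) j) + carry_poly p \<delta> = pCons d' ?rest + smult e p"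
  proof -
    have "pCons (d 0) (\<Sum>j<l. monom (d (Suc j)) j) +
        pCons (?z - coeff p 0 * e) (carry_poly p (case_nat (- e) \<delta>)) = pCons d' ?rest"
      using eq by (simp add: algebra_simps)
    then show ?thesis unfolding monom_sum_Suc
      by (subst carry_poly_pCons[OF degree_pos, of \<delta> e]) (simp only: add.assoc[symmetric])
  qed
  ultimately show ?case by simp
qed

lemma carry_in_shifts: "\<forall>k. \<delta> k \<in> \<Delta> \<Longrightarrow> carry_poly p \<delta> \<in> digit_rep_shifts (order_set \<omega>) p D"
  unfolding digit_rep_shifts_def
proof (intro CollectI allI impI)
  fix b assume \<delta>: "\<forall>k. \<delta> k \<in> \<Delta>" and "digit_rep (order_set \<omega>) p D b"
  then obtain l d q where "\<forall>j<l. d j \<in> D" "q \<in> poly_over (order_set \<omega>)"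
    and eq: "b - (\<Sum>j<l. monom (d j) j) = p * q" unfolding digit_rep_def by blast
  then have "digit_rep (order_set \<omega>) p D ((\<Sum>j<l. monom (d j) j) + carry_poly p \<delta> + p * q)"
    using \<delta> by (intro digit_rep_add_mult digit_rep_digits_plus_carry)
  moreover have "(\<Sum>j<l. monom (d j) j) + carry_poly p \<delta> + p * q = b + carry_poly p \<delta>"
    using eq by (simp add: algebra_simps)
  ultimately show "digit_rep (order_set \<omega>) p D (b + carry_poly p \<delta>)" by simp
qed

lemma Delta_const_in_shifts: "c \<in> \<Delta> \<Longrightarrow> [:c:] \<in> digit_rep_shifts (order_set \<omega>) p D"
  using carry_in_shifts[of "\<lambda>k. if k = degree p - 1 then c else 0"] zero_in_Delta
    carry_poly_top[OF _ degree_pos] gns by (simp add: is_GNS_def)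

text \<open>The vectors \<open>v \<in> \<int>\<^sup>k\<close> whose constant \<open>v \<cdot> \<omega>\<close> is a shift contain \<open>0\<close> and are closed under
  adding neighbours, so they exhaust \<open>\<int>\<^sup>k\<close>.\<close>
lemma const_in_shifts: "c \<in> order_set \<omega> \<Longrightarrow> [:c:] \<in> digit_rep_shifts (order_set \<omega>) p D"
proof -
  assume "c \<in> order_set \<omega>"
  then obtain z where c: "c = lin_comb (\<lambda>i. of_int (z i)) \<omega>" by (auto simp: order_set_def)
  let ?H = "{v::real^'k. int_vec v \<and> [:lin_comb (\<lambda>i. of_real (v$i)) \<omega>:] \<in> digit_rep_shifts (order_set \<omega>) p D}"
  have "(\<chi> i. of_int (z i)) \<in> ?H"
  proof (rule int_vecs_generated_by_nbr_set[of F])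
    show "bounded F" using fd by (simp add: is_fundamental_domain_def)
    show "\<forall>x. \<exists>f z. f \<in> F \<and> int_vec z \<and> x = f + z"
      using fd unfolding is_fundamental_domain_def by (metis prod.collapse)
    show "0 \<in> ?H" by (simp add: int_vec_def lin_comb_def digit_rep_shifts_def)
    show "\<forall>h\<in>?H. \<forall>m\<in>nbr_set F. h + m \<in> ?H"
    proof (intro ballI)
      fix h m assume h: "h \<in> ?H" and m: "m \<in> nbr_set F"
      have "lin_comb (\<lambda>i. of_real (m$i)) \<omega> \<in> \<Delta>" using m unfolding Delta_set_def by blast
      then have "[:lin_comb (\<lambda>i. of_real (m$i)) \<omega>:] \<in> digit_rep_shifts (order_set \<omega>) p D"
        by (rule Delta_const_in_shifts)
      then have "[:lin_comb (\<lambda>i. of_real (h$i)) \<omega>:] + [:lin_comb (\<lambda>i. of_real (m$i)) \<omega>:]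
          \<in> digit_rep_shifts (order_set \<omega>) p D"
        using h digit_rep_shifts_add by blast
      moreover have "int_vec (h + m)" using h m by (auto simp: int_vec_def nbr_set_def)
      ultimately show "h + m \<in> ?H" by (simp add: lin_comb_add)
    qed
  qed (auto simp: int_vec_def)
  then show ?thesis using c by simp
qed

theorem finiteness_property_holds: "finiteness_property (order_set \<omega>) p D"
  using zero_in_D const_in_shifts by (rule finiteness_property_if_const_shifts)

end

theorem mainTheorem8:
  fixes \<omega> :: "'k::finite \<Rightarrow> complex" and i0 :: 'k
    and p :: "complex poly" and D :: "complex set" and F :: "(real^'k) set"
  assumes basis: "is_order_basis \<omega> i0"
    and gns: "is_GNS (order_set \<omega>) p D"
    and fd: "is_fundamental_domain \<omega> p D F"
    and i: "{z + d | z d. z \<in> {\<Sum>j\<in>{1..degree p}. \<delta> j * coeff p j | \<delta>. \<forall>j. \<delta> j \<in> Delta_set \<omega> F}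
                        \<and> d \<in> D}
            \<subseteq> {d + coeff p 0 * e | d e. d \<in> D \<and> e \<in> Delta_set \<omega> F}"
    and ii: "{\<Sum>j\<in>{1..degree p}. \<delta> j * coeff p j | \<delta>. \<forall>j. \<delta> j \<in> Delta_set \<omega> F}
            \<subseteq> D \<union> {d - coeff p 0 | d. d \<in> D}"
    and iii: "\<forall>J \<subseteq> {1..degree p}. (\<Sum>j\<in>J. coeff p j) \<in> D"
  shows "finiteness_property (order_set \<omega>) p D"
proof (cases "degree p = 0")
  case True
  then have "p = 1" using gns by (metis degree_0_id is_GNS_def one_pCons)
  then show ?thesis by (simp add: finiteness_property_1)
next
  case False
  then interpret GNS_criterion \<omega> p D F using gns fd i ii iii by unfold_locales auto
  show ?thesis by (rule finiteness_property_holds)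
qed

end
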